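(* For any integers $k,l\geq 1$, the subsets $C_{k,l}$ and $\Phi_{k,l}C_{l,k}=\{\Phi_{k,l}\circ\tau\mid\tau\in C_{l,k}\}$ of $S_{k+l}$ are disjoint.
   Context: $S_m$ is the symmetric group on $\{1,\dots,m\}$ with product given by composition. An $(s,t)$-shuffle is a pair $(\alpha,\beta)$ of strictly increasing maps $\alpha:\{1,\dots,s\}\to\{1,\dots,s+t\}$, $\beta:\{1,\dots,t\}\to\{1,\dots,s+t\}$ with disjoint images; ${\sf Sh}^1(s,t)$ is the set of those with $\alpha(1)=1$. For $p,q\geq1$, $0\leq i\leq q-1$ and $(\alpha,\beta)\in{\sf Sh}^1(q-i,i)$, let $\tilde\sigma_{\alpha,\beta,p,q}\in S_{p+q}$ be given by $\tilde\sigma(j)=j$ for $1\leq j\leq p$, $\tilde\sigma(p+j)=p+\beta(i+1-j)$ for $1\leq j\leq i$, $\tilde\sigma(p+i+j)=p+\alpha(j)$ for $1\leq j\leq q-i$; let $\sigma_{\alpha,\beta,p,q}=\tilde\sigma_{\alpha,\beta,p,q}\circ(1,2)^i$ where $(1,2)$ is the transposition. Set $C_{p,q}=\{\sigma_{\alpha,\beta,p,q}\mid 0\leq i\leq q-1,\ (\alpha,\beta)\in{\sf Sh}^1(q-i,i)\}\subseteq S_{p+q}$. $\Phi_{k,l}\in S_{k+l}$ is defined by $\Phi_{k,l}(i)=i+k$ if $i\leq l$ and $\Phi_{k,l}(i)=i-l$ if $i>l$. *)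

theory Defs
  imports Main
begin

text \<open>Permutations of {1..m} are represented as functions nat \<Rightarrow> nat,
  extended by the identity outside {1..m}.  Composition is function composition.\<close>

text \<open>(s,t)-shuffles with alpha(1) = 1. The maps alpha, beta are functions nat \<Rightarrow> nat
  of which only the values on {1..s} resp. {1..t} matter.\<close>
definition Sh1 :: "nat \<Rightarrow> nat \<Rightarrow> ((nat \<Rightarrow> nat) \<times> (nat \<Rightarrow> nat)) set" where
  "Sh1 s t = {(\<alpha>, \<beta>).
      strict_mono_on {1..s} \<alpha> \<and> \<alpha> ` {1..s} \<subseteq> {1..s+t} \<and>
      strict_mono_on {1..t} \<beta> \<and> \<beta> ` {1..t} \<subseteq> {1..s+t} \<and>
      \<alpha> ` {1..s} \<inter> \<beta> ` {1..t} = {} \<and> \<alpha> 1 = 1}"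

definition sigma_tilde :: "(nat \<Rightarrow> nat) \<Rightarrow> (nat \<Rightarrow> nat) \<Rightarrow> nat \<Rightarrow> nat \<Rightarrow> nat \<Rightarrow> nat \<Rightarrow> nat" where
  "sigma_tilde \<alpha> \<beta> p q i j =
     (if 1 \<le> j \<and> j \<le> p then j
      else if p < j \<and> j \<le> p + i then p + \<beta> (i + 1 - (j - p))
      else if p + i < j \<and> j \<le> p + q then p + \<alpha> (j - p - i)
      else j)"

definition swap12 :: "nat \<Rightarrow> nat" where
  "swap12 j = (if j = 1 then 2 else if j = 2 then 1 else j)"

definition sigma :: "(nat \<Rightarrow> nat) \<Rightarrow> (nat \<Rightarrow> nat) \<Rightarrow> nat \<Rightarrow> nat \<Rightarrow> nat \<Rightarrow> nat \<Rightarrow> nat" where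
  "sigma \<alpha> \<beta> p q i = sigma_tilde \<alpha> \<beta> p q i \<circ> (swap12 ^^ i)"

definition C :: "nat \<Rightarrow> nat \<Rightarrow> (nat \<Rightarrow> nat) set" where
  "C p q = {sigma \<alpha> \<beta> p q i | i \<alpha> \<beta>. i \<le> q - 1 \<and> (\<alpha>, \<beta>) \<in> Sh1 (q - i) i}"

definition Phi :: "nat \<Rightarrow> nat \<Rightarrow> nat \<Rightarrow> nat" where
  "Phi k l i = (if 1 \<le> i \<and> i \<le> l then i + k
                else if l < i \<and> i \<le> k + l then i - l else i)"

end

theory Submission
  imports Defs
begin

text \<open>Compare both sides at the point k + i + 1, where i is the parameter of the element
  of C k l. There the left side takes the value k + 1 (it is k + alpha 1), while Phi k l takes
  the value k + 1 only at 1, and no element of C l k sends a point j \<ge> 3 to 1.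
  The point k + i + 1 is below 3 only when k = 1 and i = 0; then the element of C l k has
  parameter 0 too, so it fixes 1 like the left side, whereas Phi k l moves 1.\<close>

lemma funpow_swap12_fixes: "3 \<le> x \<Longrightarrow> (swap12 ^^ n) x = x"
  by (induction n) (auto simp: swap12_def)

lemma Sh1_values_pos:
  assumes "(\<alpha>, \<beta>) \<in> Sh1 s t"
  shows "j \<in> {1..s} \<Longrightarrow> 1 \<le> \<alpha> j" and "j \<in> {1..t} \<Longrightarrow> 1 \<le> \<beta> j"
  using assms unfolding Sh1_def by (fastforce simp: image_subset_iff)+

lemma sigma_tilde_neq_1:
  assumes "(\<alpha>, \<beta>) \<in> Sh1 (q - i) i" and "1 \<le> p" and "j \<noteq> 1"
  shows "sigma_tilde \<alpha> \<beta> p q i j \<noteq> 1"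
proof -
  have "1 \<le> \<beta> (i + 1 - (j - p))" if "p < j" "j \<le> p + i"
    using that by (intro Sh1_values_pos(2)[OF assms(1)]) auto
  moreover have "1 \<le> \<alpha> (j - p - i)" if "p + i < j" "j \<le> p + q"
    using that by (intro Sh1_values_pos(1)[OF assms(1)]) auto
  ultimately show ?thesis
    using assms(2,3) unfolding sigma_tilde_def by auto
qed

lemma C_neq_1:
  assumes "\<tau> \<in> C p q" and "1 \<le> p" and "3 \<le> j"
  shows "\<tau> j \<noteq> 1"
  using assms sigma_tilde_neq_1[of _ _ q _ p j]
  unfolding C_def sigma_def by (auto simp: funpow_swap12_fixes)

lemma sigma_first_alpha_value:
  assumes "(\<alpha>, \<beta>) \<in> Sh1 (q - i) i" and "i < q" and "2 \<le> p + i"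
  shows "sigma \<alpha> \<beta> p q i (p + i + 1) = p + 1"
  using assms unfolding sigma_def sigma_tilde_def Sh1_def
  by (auto simp: funpow_swap12_fixes)

lemma sigma_0_fixes_1: "1 \<le> p \<Longrightarrow> sigma \<alpha> \<beta> p q 0 1 = 1"
  unfolding sigma_def sigma_tilde_def by simp

lemma Phi_eq_plus_1_iff: "1 \<le> l \<Longrightarrow> Phi k l y = k + 1 \<longleftrightarrow> y = 1"
  by (auto simp: Phi_def)

theorem lemma4:
  fixes k l :: nat
  assumes "k \<ge> 1" and "l \<ge> 1"
  shows "C k l \<inter> ((\<lambda>\<tau>. Phi k l \<circ> \<tau>) ` C l k) = {}"
proof (rule ccontr)
  assume "C k l \<inter> ((\<lambda>\<tau>. Phi k l \<circ> \<tau>) ` C l k) \<noteq> {}"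
  then obtain \<sigma> \<tau> where \<sigma>: "\<sigma> \<in> C k l" and \<tau>: "\<tau> \<in> C l k" and eq: "\<sigma> = Phi k l \<circ> \<tau>"
    by blast
  from \<sigma> obtain i \<alpha> \<beta> where
    i: "i \<le> l - 1" "(\<alpha>, \<beta>) \<in> Sh1 (l - i) i" and \<sigma>_eq: "\<sigma> = sigma \<alpha> \<beta> k l i"
    unfolding C_def by blast
  show False
  proof (cases "2 \<le> k + i")
    case True
    have "i < l" using i(1) \<open>l \<ge> 1\<close> by simp
    then have "\<sigma> (k + i + 1) = k + 1"
      unfolding \<sigma>_eq using sigma_first_alpha_value[OF i(2) _ True] by simp
    then have "\<tau> (k + i + 1) = 1"
      unfolding eq comp_apply Phi_eq_plus_1_iff[OF \<open>l \<ge> 1\<close>] .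
    moreover have "\<tau> (k + i + 1) \<noteq> 1"
      using C_neq_1[OF \<tau> \<open>l \<ge> 1\<close>] True by simp
    ultimately show False by contradiction
  next
    case False
    then have "k = 1" "i = 0" using assms by auto
    with \<tau> obtain \<alpha>' \<beta>' where "\<tau> = sigma \<alpha>' \<beta>' l k 0"
      unfolding C_def by auto
    then have "\<tau> 1 = 1" using sigma_0_fixes_1 \<open>l \<ge> 1\<close> by simp
    moreover have "\<sigma> 1 = 1" using \<sigma>_eq \<open>i = 0\<close> sigma_0_fixes_1 assms(1) by simp
    ultimately show False using eq assms by (simp add: Phi_def)
  qed
qed

end
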